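(* Let $\mathbb{F}$ be a field of characteristic different from $2$, let $n\geq 3$, and let $\mathcal{A}$ be a division $*$-algebra which is one of: $\mathbb{F}$, a binarion algebra $\mathcal{B}(\mathbb{F})$, or a quaternion algebra $\mathcal{Q}(\mathbb{F})$ (as defined in the context). Let $H_n(\mathcal{A})$ be the Jordan algebra of self-adjoint $n\times n$ matrices over $\mathcal{A}$. Then every 2-local inner derivation on $H_n(\mathcal{A})$ is a derivation.
   Context: $\mathbb{F}$ carries the trivial involution. $\mathcal{B}(\mathbb{F})$ is the associative unital algebra with basis $\mathbf{1},i$, $i^2=\lambda\mathbf{1}$ ($\lambda\in\mathbb{F}\setminus\{0\}$), with involution $\overline{\alpha_0\mathbf{1}+\alpha_1 i}=\alpha_0\mathbf{1}-\alpha_1 i$. $\mathcal{Q}(\mathbb{F})$ is the associative unital algebra with basis $\mathbf{1},i,j,k$, $i^2=\lambda\mathbf{1}$, $j^2=\mu\mathbf{1}$, $ij=-ji=k$ ($\lambda,\mu\in\mathbb{F}\setminus\{0\}$), with involution $\overline{\alpha_0\mathbf{1}+\alpha_1i+\alpha_2j+\alpha_3k}=\alpha_0\mathbf{1}-\alpha_1i-\alpha_2j-\alpha_3k$. $M_n(\mathcal{A})$ has involution $(a_{i,j})^*=(\overline{a_{j,i}})$, and $H_n(\mathcal{A})=\{x\in M_n(\mathcal{A}):x^*=x\}$ with Jordan product $a\circ b=\frac12(ab+ba)$. A derivation is a linear map $D$ with $D(x\circ y)=D(x)\circ y+x\circ D(y)$. An inner derivation is a map $x\mapsto\sum_{k=1}^m\big(a_k\circ(b_k\circ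 x)-b_k\circ(a_k\circ x)\big)$ with $a_k,b_k\in H_n(\mathcal{A})$. A 2-local inner derivation is a map $\Delta:H_n(\mathcal{A})\to H_n(\mathcal{A})$ (not assumed linear) such that for every $x,y$ there is an inner derivation $D$ with $\Delta(x)=D(x)$, $\Delta(y)=D(y)$. *)

theory Defs
  imports Main "HOL-Library.Product_Plus"
begin

text \<open>Elements of the algebras are represented by coordinate quadruples
  (alpha0, alpha1, alpha2, alpha3) w.r.t. the basis 1, i, j, k of the quaternion
  algebra with i^2 = l, j^2 = m, ij = -ji = k.  The field F and the binarion
  algebra B(F) are the subalgebras spanned by 1, resp. 1, i.\<close>

type_synonym 'a qd = "'a \<times> 'a \<times> 'a \<times> 'a"
type_synonym 'a mat = "nat \<Rightarrow> nat \<Rightarrow> 'a qd"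

datatype alg_kind = FieldAlg | Binarion | Quaternion

fun qmul :: "'a::field \<Rightarrow> 'a \<Rightarrow> 'a qd \<Rightarrow> 'a qd \<Rightarrow> 'a qd" where
  "qmul l m (a0, a1, a2, a3) (b0, b1, b2, b3) =
     (a0*b0 + l*a1*b1 + m*a2*b2 - l*m*a3*b3,
      a0*b1 + a1*b0 - m*a2*b3 + m*a3*b2,
      a0*b2 + a2*b0 + l*a1*b3 - l*a3*b1,
      a0*b3 + a3*b0 + a1*b2 - a2*b1)"

definition qone :: "'a::field qd" where "qone = (1, 0, 0, 0)"

fun qconj :: "'a::field qd \<Rightarrow> 'a qd" where
  "qconj (a0, a1, a2, a3) = (a0, -a1, -a2, -a3)"

fun qsmul :: "'a::field \<Rightarrow> 'a qd \<Rightarrow> 'a qd" where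
  "qsmul c (a0, a1, a2, a3) = (c*a0, c*a1, c*a2, c*a3)"

definition alg_carrier :: "alg_kind \<Rightarrow> 'a::field qd set" where
  "alg_carrier k = (case k of
      FieldAlg \<Rightarrow> {(a, 0, 0, 0) | a. True}
    | Binarion \<Rightarrow> {(a, b, 0, 0) | a b. True}
    | Quaternion \<Rightarrow> UNIV)"

definition division_alg :: "alg_kind \<Rightarrow> 'a::field \<Rightarrow> 'a \<Rightarrow> bool" where
  "division_alg k l m \<longleftrightarrow>
     (\<forall>x\<in>alg_carrier k. x \<noteq> 0 \<longrightarrow>
        (\<exists>y\<in>alg_carrier k. qmul l m x y = qone \<and> qmul l m y x = qone))"

definition mat_carrier :: "alg_kind \<Rightarrow> nat \<Rightarrow> 'a::field mat set" where
  "mat_carrier k n = {A. (\<forall>i j. i < n \<and> j < n \<longrightarrow> A i j \<in> alg_carrier k) \<and>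
                         (\<forall>i j. \<not> (i < n \<and> j < n) \<longrightarrow> A i j = 0)}"

definition mstar :: "'a::field mat \<Rightarrow> 'a mat" where
  "mstar A = (\<lambda>i j. qconj (A j i))"

definition Herm :: "alg_kind \<Rightarrow> nat \<Rightarrow> 'a::field mat set" where
  "Herm k n = {A \<in> mat_carrier k n. mstar A = A}"

definition mzero :: "'a::field mat" where "mzero = (\<lambda>i j. 0)"

definition madd :: "'a::field mat \<Rightarrow> 'a mat \<Rightarrow> 'a mat" where
  "madd A B = (\<lambda>i j. A i j + B i j)"

definition msub :: "'a::field mat \<Rightarrow> 'a mat \<Rightarrow> 'a mat" where
  "msub A B = (\<lambda>i j. A i j - B i j)"

definition msmul :: "'a::field \<Rightarrow> 'a mat \<Rightarrow> 'a mat" where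
  "msmul c A = (\<lambda>i j. qsmul c (A i j))"

definition mmul :: "'a::field \<Rightarrow> 'a \<Rightarrow> nat \<Rightarrow> 'a mat \<Rightarrow> 'a mat \<Rightarrow> 'a mat" where
  "mmul l m n A B = (\<lambda>i j. if i < n \<and> j < n
       then (\<Sum>t<n. qmul l m (A i t) (B t j)) else 0)"

definition jprod :: "'a::field \<Rightarrow> 'a \<Rightarrow> nat \<Rightarrow> 'a mat \<Rightarrow> 'a mat \<Rightarrow> 'a mat" where
  "jprod l m n A B = msmul (inverse 2) (madd (mmul l m n A B) (mmul l m n B A))"

definition is_derivation :: "alg_kind \<Rightarrow> 'a::field \<Rightarrow> 'a \<Rightarrow> nat \<Rightarrow> ('a mat \<Rightarrow> 'a mat) \<Rightarrow> bool" where
  "is_derivation k l m n D \<longleftrightarrow>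
     (\<forall>x\<in>Herm k n. D x \<in> Herm k n) \<and>
     (\<forall>x\<in>Herm k n. \<forall>y\<in>Herm k n. D (madd x y) = madd (D x) (D y)) \<and>
     (\<forall>c. \<forall>x\<in>Herm k n. D (msmul c x) = msmul c (D x)) \<and>
     (\<forall>x\<in>Herm k n. \<forall>y\<in>Herm k n.
        D (jprod l m n x y) = madd (jprod l m n (D x) y) (jprod l m n x (D y)))"

definition is_inner_derivation :: "alg_kind \<Rightarrow> 'a::field \<Rightarrow> 'a \<Rightarrow> nat \<Rightarrow> ('a mat \<Rightarrow> 'a mat) \<Rightarrow> bool" where
  "is_inner_derivation k l m n D \<longleftrightarrow>
     (\<exists>ps. set ps \<subseteq> Herm k n \<times> Herm k n \<and>
        (\<forall>x\<in>Herm k n. D x = foldr madd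
            (map (\<lambda>(a, b). msub (jprod l m n a (jprod l m n b x))
                                 (jprod l m n b (jprod l m n a x))) ps) mzero))"

definition is_2local_inner_derivation :: "alg_kind \<Rightarrow> 'a::field \<Rightarrow> 'a \<Rightarrow> nat \<Rightarrow> ('a mat \<Rightarrow> 'a mat) \<Rightarrow> bool" where
  "is_2local_inner_derivation k l m n \<Delta> \<longleftrightarrow>
     (\<forall>x\<in>Herm k n. \<Delta> x \<in> Herm k n) \<and>
     (\<forall>x\<in>Herm k n. \<forall>y\<in>Herm k n. \<exists>D. is_inner_derivation k l m n D \<and>
        \<Delta> x = D x \<and> \<Delta> y = D y)"

end

theory Submission
  imports Defs "HOL-Library.Function_Algebras"
begin

text \<open>Expanding the Jordan products shows that the inner derivation
  x \<mapsto> \<Sum>_k (a_k \<circ> (b_k \<circ> x) - b_k \<circ> (a_k \<circ> x)) is the commutator map x \<mapsto> Sx - xS with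
  S = \<Sum>_k (a_k b_k - b_k a_k)/4.  Such a map satisfies the Leibniz rule and is skew-adjoint
  for the trace form \<langle>x, y\<rangle> = Re tr(xy), which is nondegenerate on H_n(A).
  A 2-local inner derivation \<Delta> agrees with an inner derivation on any two points,
  so it is still skew-adjoint, which by nondegeneracy forces linearity, and it
  satisfies \<Delta>(x \<circ> x) = \<Delta>x \<circ> x + x \<circ> \<Delta>x; polarising this identity (char \<noteq> 2)
  gives the Leibniz rule.\<close>

lemma qmul_components: "qmul l m a b =
  (fst a * fst b + l * fst (snd a) * fst (snd b) + m * fst (snd (snd a)) * fst (snd (snd b))
     - l * m * snd (snd (snd a)) * snd (snd (snd b)),
   fst a * fst (snd b) + fst (snd a) * fst b - m * fst (snd (snd a)) * snd (snd (snd b))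
     + m * snd (snd (snd a)) * fst (snd (snd b)),
   fst a * fst (snd (snd b)) + fst (snd (snd a)) * fst b + l * fst (snd a) * snd (snd (snd b))
     - l * snd (snd (snd a)) * fst (snd b),
   fst a * snd (snd (snd b)) + snd (snd (snd a)) * fst b + fst (snd a) * fst (snd (snd b))
     - fst (snd (snd a)) * fst (snd b))"
  by (cases a; cases b) auto

lemma qsmul_components:
  "qsmul c a = (c * fst a, c * fst (snd a), c * fst (snd (snd a)), c * snd (snd (snd a)))"
  by (cases a) auto

lemma qconj_components:
  "qconj a = (fst a, - fst (snd a), - fst (snd (snd a)), - snd (snd (snd a)))"
  by (cases a) auto

lemmas qd_components = qmul_components qsmul_components qconj_components prod_eq_iff

lemma qmul_assoc: "qmul l m (qmul l m a b) c = qmul l m a (qmul l m b c)"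
  by (simp add: qd_components algebra_simps)

lemma qmul_add_left: "qmul l m (a + b) c = qmul l m a c + qmul l m b c"
  and qmul_add_right: "qmul l m a (b + c) = qmul l m a b + qmul l m a c"
  and qmul_diff_left: "qmul l m (a - b) c = qmul l m a c - qmul l m b c"
  and qmul_diff_right: "qmul l m a (b - c) = qmul l m a b - qmul l m a c"
  and qmul_qsmul_left: "qmul l m (qsmul s a) b = qsmul s (qmul l m a b)"
  and qmul_qsmul_right: "qmul l m a (qsmul s b) = qsmul s (qmul l m a b)"
  and qmul_zero_left [simp]: "qmul l m 0 a = 0"
  and qmul_zero_right [simp]: "qmul l m a 0 = 0"
  by (simp_all add: qd_components algebra_simps)

lemma fst_qmul_commute: "fst (qmul l m a b) = fst (qmul l m b a)"
  by (simp add: qd_components algebra_simps)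

lemma fst_qmul_qconj: "fst (qmul l m (qconj a) (qconj b)) = fst (qmul l m a b)"
  by (simp add: qd_components)

lemma qconj_qmul: "qconj (qmul l m a b) = qmul l m (qconj b) (qconj a)"
  and qconj_add: "qconj (a + b) = qconj a + qconj b"
  and qconj_diff: "qconj (a - b) = qconj a - qconj b"
  and qconj_qsmul: "qconj (qsmul c a) = qsmul c (qconj a)"
  and qconj_zero [simp]: "qconj 0 = 0"
  and qconj_qconj [simp]: "qconj (qconj a) = a"
  by (simp_all add: qd_components algebra_simps)

lemma qsmul_add: "qsmul c (a + b) = qsmul c a + qsmul c b"
  and qsmul_zero [simp]: "qsmul c 0 = 0"
  and fst_qsmul: "fst (qsmul c a) = c * fst a"
  by (simp_all add: qd_components algebra_simps)

lemma qsmul_half_double: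
  assumes "(2::'a::field) \<noteq> 0"
  shows "qsmul (inverse 2) (a + a) = (a :: 'a qd)"
  using assms by (simp add: qd_components field_simps)

lemma qmul_sum_left: "qmul l m (\<Sum>t\<in>A. f t) c = (\<Sum>t\<in>A. qmul l m (f t) c)"
  by (induction A rule: infinite_finite_induct) (auto simp: qmul_add_left)

lemma qmul_sum_right: "qmul l m c (\<Sum>t\<in>A. f t) = (\<Sum>t\<in>A. qmul l m c (f t))"
  by (induction A rule: infinite_finite_induct) (auto simp: qmul_add_right)

lemma qconj_sum: "qconj (\<Sum>t\<in>A. f t) = (\<Sum>t\<in>A. qconj (f t))"
  by (induction A rule: infinite_finite_induct) (auto simp: qconj_add)

lemma qsmul_sum: "qsmul c (\<Sum>t\<in>A. f t) = (\<Sum>t\<in>A. qsmul c (f t))"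
  by (induction A rule: infinite_finite_induct) (auto simp: qsmul_add)

lemma alg_carrier_add: "a \<in> alg_carrier k \<Longrightarrow> b \<in> alg_carrier k \<Longrightarrow> a + b \<in> alg_carrier k"
  and alg_carrier_diff: "a \<in> alg_carrier k \<Longrightarrow> b \<in> alg_carrier k \<Longrightarrow> a - b \<in> alg_carrier k"
  and alg_carrier_qmul: "a \<in> alg_carrier k \<Longrightarrow> b \<in> alg_carrier k \<Longrightarrow> qmul l m a b \<in> alg_carrier k"
  and alg_carrier_qsmul: "a \<in> alg_carrier k \<Longrightarrow> qsmul c a \<in> alg_carrier k"
  and alg_carrier_qconj: "a \<in> alg_carrier k \<Longrightarrow> qconj a \<in> alg_carrier k"
  and alg_carrier_zero: "0 \<in> alg_carrier k"
  and alg_carrier_qone: "qone \<in> alg_carrier k"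
  by (cases k; auto simp: alg_carrier_def zero_prod_def qone_def)+

lemma alg_carrier_sum: "(\<And>t. t \<in> A \<Longrightarrow> f t \<in> alg_carrier k) \<Longrightarrow> (\<Sum>t\<in>A. f t) \<in> alg_carrier k"
  by (induction A rule: infinite_finite_induct) (auto simp: alg_carrier_zero alg_carrier_add)

lemma madd_eq_plus: "madd A B = A + B"
  and msub_eq_minus: "msub A B = A - B"
  and mzero_eq_0: "mzero = 0"
  by (simp_all add: fun_eq_iff madd_def msub_def mzero_def)

lemma msmul_add: "msmul c (A + B) = msmul c A + msmul c B"
  by (simp add: fun_eq_iff msmul_def qsmul_add)

lemma msmul_half_double:
  assumes "(2::'a::field) \<noteq> 0"
  shows "msmul (inverse 2) (A + A) = (A :: 'a mat)"
  unfolding msmul_def plus_fun_def qsmul_half_double[OF assms] ..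

lemma mat_double_cancel: "(2::'a::field) \<noteq> 0 \<Longrightarrow> (A :: 'a mat) + A = B + B \<Longrightarrow> A = B"
  by (metis msmul_half_double)

lemma mmul_add_left: "mmul l m n (A + B) C = mmul l m n A C + mmul l m n B C"
  and mmul_add_right: "mmul l m n A (B + C) = mmul l m n A B + mmul l m n A C"
  and mmul_diff_left: "mmul l m n (A - B) C = mmul l m n A C - mmul l m n B C"
  and mmul_diff_right: "mmul l m n A (B - C) = mmul l m n A B - mmul l m n A C"
  and mmul_zero_left [simp]: "mmul l m n 0 A = 0"
  and mmul_zero_right [simp]: "mmul l m n A 0 = 0"
  by (simp_all add: fun_eq_iff mmul_def qmul_add_left qmul_add_right qmul_diff_left
      qmul_diff_right sum.distrib sum_subtractf)

lemma mmul_msmul_left: "mmul l m n (msmul c A) B = msmul c (mmul l m n A B)"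
  and mmul_msmul_right: "mmul l m n A (msmul c B) = msmul c (mmul l m n A B)"
  by (simp_all add: fun_eq_iff mmul_def msmul_def qmul_qsmul_left qmul_qsmul_right qsmul_sum)

lemma mmul_assoc: "mmul l m n (mmul l m n A B) C = mmul l m n A (mmul l m n B C)"
proof -
  have "(\<Sum>t<n. qmul l m (\<Sum>s<n. qmul l m (A i s) (B s t)) (C t j))
      = (\<Sum>s<n. qmul l m (A i s) (\<Sum>t<n. qmul l m (B s t) (C t j)))" for i j
  proof -
    have "(\<Sum>t<n. qmul l m (\<Sum>s<n. qmul l m (A i s) (B s t)) (C t j))
        = (\<Sum>t<n. \<Sum>s<n. qmul l m (A i s) (qmul l m (B s t) (C t j)))"
      by (simp add: qmul_sum_left qmul_assoc)
    also have "\<dots> = (\<Sum>s<n. \<Sum>t<n. qmul l m (A i s) (qmul l m (B s t) (C t j)))"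
      by (rule sum.swap)
    finally show ?thesis
      by (simp add: qmul_sum_right)
  qed
  then show ?thesis
    by (simp add: fun_eq_iff mmul_def)
qed

lemma mstar_mmul: "mstar (mmul l m n A B) = mmul l m n (mstar B) (mstar A)"
  and mstar_add: "mstar (A + B) = mstar A + mstar B"
  and mstar_diff: "mstar (A - B) = mstar A - mstar B"
  and mstar_msmul: "mstar (msmul c A) = msmul c (mstar A)"
  by (simp_all add: fun_eq_iff mmul_def mstar_def msmul_def qconj_sum qconj_qmul qconj_add
      qconj_diff qconj_qsmul)

lemma mat_carrier_add: "A \<in> mat_carrier k n \<Longrightarrow> B \<in> mat_carrier k n \<Longrightarrow> A + B \<in> mat_carrier k n"
  and mat_carrier_diff: "A \<in> mat_carrier k n \<Longrightarrow> B \<in> mat_carrier k n \<Longrightarrow> A - B \<in> mat_carrier k n"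
  and mat_carrier_msmul: "A \<in> mat_carrier k n \<Longrightarrow> msmul c A \<in> mat_carrier k n"
  and mat_carrier_mmul: "A \<in> mat_carrier k n \<Longrightarrow> B \<in> mat_carrier k n \<Longrightarrow> mmul l m n A B \<in> mat_carrier k n"
  by (auto simp: mat_carrier_def msmul_def mmul_def
      intro!: alg_carrier_add alg_carrier_diff alg_carrier_qsmul alg_carrier_sum alg_carrier_qmul)

lemma Herm_add: "A \<in> Herm k n \<Longrightarrow> B \<in> Herm k n \<Longrightarrow> A + B \<in> Herm k n"
  and Herm_diff: "A \<in> Herm k n \<Longrightarrow> B \<in> Herm k n \<Longrightarrow> A - B \<in> Herm k n"
  and Herm_msmul: "A \<in> Herm k n \<Longrightarrow> msmul c A \<in> Herm k n"
  by (simp_all add: Herm_def mat_carrier_add mat_carrier_diff mat_carrier_msmul mstar_add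
      mstar_diff mstar_msmul)

lemma jprod_commute: "jprod l m n A B = jprod l m n B A"
  by (simp add: jprod_def madd_eq_plus add.commute)

lemma jprod_add_left: "jprod l m n (A + B) C = jprod l m n A C + jprod l m n B C"
  and jprod_add_right: "jprod l m n A (B + C) = jprod l m n A B + jprod l m n A C"
  by (simp_all add: jprod_def madd_eq_plus mmul_add_left mmul_add_right msmul_add add_ac)

lemma Herm_jprod: "A \<in> Herm k n \<Longrightarrow> B \<in> Herm k n \<Longrightarrow> jprod l m n A B \<in> Herm k n"
  by (simp add: Herm_def jprod_def madd_eq_plus mat_carrier_msmul mat_carrier_add
      mat_carrier_mmul mstar_msmul mstar_add mstar_mmul add.commute)

definition trace_form :: "'a::field \<Rightarrow> 'a \<Rightarrow> nat \<Rightarrow> 'a mat \<Rightarrow> 'a mat \<Rightarrow> 'a" where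
  "trace_form l m n A B = (\<Sum>i<n. \<Sum>t<n. fst (qmul l m (A i t) (B t i)))"

lemma trace_form_add_left: "trace_form l m n (A + B) C = trace_form l m n A C + trace_form l m n B C"
  and trace_form_add_right: "trace_form l m n A (B + C) = trace_form l m n A B + trace_form l m n A C"
  and trace_form_diff_left: "trace_form l m n (A - B) C = trace_form l m n A C - trace_form l m n B C"
  and trace_form_diff_right: "trace_form l m n A (B - C) = trace_form l m n A B - trace_form l m n A C"
  and trace_form_msmul_left: "trace_form l m n (msmul c A) B = c * trace_form l m n A B"
  by (simp_all add: trace_form_def msmul_def qmul_add_left qmul_add_right qmul_diff_left
      qmul_diff_right qmul_qsmul_left fst_qsmul sum.distrib sum_subtractf sum_distrib_left)

lemma trace_form_commute: "trace_form l m n A B = trace_form l m n B A"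
  unfolding trace_form_def by (subst sum.swap) (simp add: fst_qmul_commute)

lemma trace_form_mmul: "trace_form l m n (mmul l m n A B) C = trace_form l m n A (mmul l m n B C)"
proof -
  have "trace_form l m n (mmul l m n A B) C
      = (\<Sum>i<n. \<Sum>t<n. \<Sum>s<n. fst (qmul l m (A i s) (qmul l m (B s t) (C t i))))"
    by (simp add: trace_form_def mmul_def qmul_sum_left qmul_assoc fst_sum)
  also have "\<dots> = (\<Sum>i<n. \<Sum>s<n. \<Sum>t<n. fst (qmul l m (A i s) (qmul l m (B s t) (C t i))))"
    by (rule sum.cong[OF refl], rule sum.swap)
  also have "\<dots> = trace_form l m n A (mmul l m n B C)"
    by (simp add: trace_form_def mmul_def qmul_sum_right fst_sum)
  finally show ?thesis .
qed

definition mcomm :: "'a::field \<Rightarrow> 'a \<Rightarrow> nat \<Rightarrow> 'a mat \<Rightarrow> 'a mat \<Rightarrow> 'a mat" where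
  "mcomm l m n S A = mmul l m n S A - mmul l m n A S"

lemma mcomm_add_left: "mcomm l m n (S + T) A = mcomm l m n S A + mcomm l m n T A"
  by (simp add: mcomm_def mmul_add_left mmul_add_right)

lemma mcomm_zero_left [simp]: "mcomm l m n 0 A = 0"
  by (simp add: mcomm_def)

lemma trace_form_mcomm:
  "trace_form l m n (mcomm l m n S A) B = - trace_form l m n A (mcomm l m n S B)"
proof -
  have "trace_form l m n (mmul l m n S A) B = trace_form l m n A (mmul l m n B S)"
    by (metis trace_form_commute trace_form_mmul)
  moreover have "trace_form l m n (mmul l m n A S) B = trace_form l m n A (mmul l m n S B)"
    by (rule trace_form_mmul)
  ultimately show ?thesis
    by (simp add: mcomm_def trace_form_diff_left trace_form_diff_right)
qed

lemmas mat_entry_simps = fun_eq_iff msmul_def qsmul_components prod_eq_iff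

lemma mcomm_jprod:
  "mcomm l m n S (jprod l m n A B)
     = jprod l m n (mcomm l m n S A) B + jprod l m n A (mcomm l m n S B)"
  unfolding mcomm_def jprod_def madd_eq_plus
  by (simp only: mmul_add_left mmul_add_right mmul_diff_left mmul_diff_right mmul_msmul_left
      mmul_msmul_right mmul_assoc) (simp add: mat_entry_simps algebra_simps)

lemma jprod_jprod_diff_eq_mcomm:
  "jprod l m n A (jprod l m n B X) - jprod l m n B (jprod l m n A X)
     = mcomm l m n (msmul (inverse 4) (mcomm l m n A B)) X"
  unfolding mcomm_def jprod_def madd_eq_plus
  by (simp only: mmul_add_left mmul_add_right mmul_diff_left mmul_diff_right mmul_msmul_left
      mmul_msmul_right mmul_assoc) (simp add: mat_entry_simps algebra_simps)

lemma foldr_madd_eq_sum_list: "foldr madd (map f ps) mzero = (\<Sum>p\<leftarrow>ps. f p)"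
  by (induction ps) (simp_all add: madd_eq_plus mzero_eq_0)

lemma mcomm_sum_list_left: "mcomm l m n (\<Sum>p\<leftarrow>ps. f p) A = (\<Sum>p\<leftarrow>ps. mcomm l m n (f p) A)"
  by (induction ps) (simp_all only: list.map sum_list.Nil sum_list.Cons mcomm_add_left mcomm_zero_left)

lemma inner_derivation_eq_mcomm:
  assumes "is_inner_derivation k l m n D"
  obtains S where "\<And>x. x \<in> Herm k n \<Longrightarrow> D x = mcomm l m n S x"
proof -
  obtain ps where "\<forall>x\<in>Herm k n. D x = foldr madd
      (map (\<lambda>(a, b). msub (jprod l m n a (jprod l m n b x)) (jprod l m n b (jprod l m n a x))) ps)
      mzero"
    using assms unfolding is_inner_derivation_def by blast
  then have "\<forall>x\<in>Herm k n. D x = mcomm l m n (\<Sum>(a, b)\<leftarrow>ps. msmul (inverse 4) (mcomm l m n a b)) x"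
    by (simp add: foldr_madd_eq_sum_list msub_eq_minus jprod_jprod_diff_eq_mcomm
        mcomm_sum_list_left case_prod_beta')
  then show ?thesis
    using that by blast
qed

lemma inner_derivation_skew_adjoint:
  assumes "is_inner_derivation k l m n D" "x \<in> Herm k n" "y \<in> Herm k n"
  shows "trace_form l m n (D x) y = - trace_form l m n x (D y)"
  using assms by (metis inner_derivation_eq_mcomm trace_form_mcomm)

lemma inner_derivation_leibniz:
  assumes "is_inner_derivation k l m n D" "x \<in> Herm k n" "y \<in> Herm k n"
  shows "D (jprod l m n x y) = jprod l m n (D x) y + jprod l m n x (D y)"
  using assms by (metis inner_derivation_eq_mcomm mcomm_jprod Herm_jprod)

definition elementary_mat :: "nat \<Rightarrow> nat \<Rightarrow> 'a::field qd \<Rightarrow> 'a mat" where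
  "elementary_mat p q e = (\<lambda>i j. if i = p \<and> j = q then e else 0)"

lemma trace_form_elementary_mat:
  assumes "p < n" "q < n"
  shows "trace_form l m n A (elementary_mat p q e) = fst (qmul l m (A q p) e)"
proof -
  have "fst (qmul l m (A i t) (elementary_mat p q e t i))
      = (if t = p then if i = q then fst (qmul l m (A q p) e) else 0 else 0)" for i t
    by (simp add: elementary_mat_def)
  then show ?thesis
    using assms by (simp add: trace_form_def)
qed

lemma elementary_mat_mat_carrier:
  "p < n \<Longrightarrow> q < n \<Longrightarrow> e \<in> alg_carrier k \<Longrightarrow> elementary_mat p q e \<in> mat_carrier k n"
  by (simp add: mat_carrier_def elementary_mat_def alg_carrier_zero)

lemma mstar_elementary_mat: "mstar (elementary_mat p q e) = elementary_mat q p (qconj e)"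
  by (auto simp: fun_eq_iff mstar_def elementary_mat_def)

lemma elementary_mat_add_mstar_Herm:
  assumes "p < n" "q < n" "e \<in> alg_carrier k"
  shows "elementary_mat p q e + elementary_mat q p (qconj e) \<in> Herm k n"
  using assms
  by (simp add: Herm_def mat_carrier_add elementary_mat_mat_carrier alg_carrier_qconj mstar_add
      mstar_elementary_mat add.commute)

lemma fst_qmul_nondegenerate:
  assumes "l \<noteq> 0" "m \<noteq> 0" "a \<in> alg_carrier k"
    and orth: "\<And>e. e \<in> alg_carrier k \<Longrightarrow> fst (qmul l m a e) = 0"
  shows "a = 0"
proof -
  obtain a0 a1 a2 a3 where a: "a = (a0, a1, a2, a3)"
    by (cases a) auto
  have "a0 = 0"
    using orth[of "(1, 0, 0, 0)"] alg_carrier_qone[of k] by (simp add: a qone_def)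
  moreover have "a1 = 0" if "k \<noteq> FieldAlg"
    using orth[of "(0, 1, 0, 0)"] assms(1) that by (cases k) (auto simp: alg_carrier_def a)
  moreover have "a2 = 0" "a3 = 0" if "k = Quaternion"
    using orth[of "(0, 0, 1, 0)"] orth[of "(0, 0, 0, 1)"] assms(1,2) that
    by (auto simp: alg_carrier_def a)
  ultimately show ?thesis
    using assms(3) by (cases k) (auto simp: alg_carrier_def a zero_prod_def)
qed

lemma trace_form_Herm_nondegenerate:
  fixes l m :: "'a::field"
  assumes "(2::'a) \<noteq> 0" "l \<noteq> 0" "m \<noteq> 0" "A \<in> Herm k n"
    and orth: "\<And>B. B \<in> Herm k n \<Longrightarrow> trace_form l m n A B = 0"
  shows "A = 0"
proof -
  have A_conj: "A i j = qconj (A j i)" for i j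
  proof -
    have "mstar A i j = A i j"
      using assms(4) by (simp add: Herm_def)
    then show ?thesis
      by (simp add: mstar_def)
  qed
  have "A q p = 0" if "p < n" "q < n" for p q
  proof (rule fst_qmul_nondegenerate[OF assms(2,3)])
    show "A q p \<in> alg_carrier k"
      using assms(4) that by (simp add: Herm_def mat_carrier_def)
    fix e :: "'a qd"
    assume "e \<in> alg_carrier k"
    \<comment> \<open>this test matrix is Hermitian also for p = q, so no separate diagonal case\<close>
    then have "0 = trace_form l m n A (elementary_mat p q e + elementary_mat q p (qconj e))"
      using orth[OF elementary_mat_add_mstar_Herm] that by simp
    also have "\<dots> = fst (qmul l m (A q p) e) + fst (qmul l m (A p q) (qconj e))"
      using that by (simp add: trace_form_add_right trace_form_elementary_mat)
    also have "fst (qmul l m (A p q) (qconj e)) = fst (qmul l m (A q p) e)"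
      by (subst A_conj) (rule fst_qmul_qconj)
    finally show "fst (qmul l m (A q p) e) = 0"
      using assms(1) by (simp flip: mult_2)
  qed
  moreover have "A q p = 0" if "\<not> (q < n \<and> p < n)" for p q
    using assms(4) that by (simp add: Herm_def mat_carrier_def)
  ultimately show ?thesis
    by (auto simp: fun_eq_iff)
qed

lemma Herm_eq_if_trace_form_eq:
  fixes l m :: "'a::field"
  assumes "(2::'a) \<noteq> 0" "l \<noteq> 0" "m \<noteq> 0" "A \<in> Herm k n" "B \<in> Herm k n"
    and "\<And>C. C \<in> Herm k n \<Longrightarrow> trace_form l m n A C = trace_form l m n B C"
  shows "A = B"
  using trace_form_Herm_nondegenerate[of l m "A - B" k n] assms
  by (simp add: Herm_diff trace_form_diff_left)

lemma two_local_inner_derivation_skew_adjoint: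
  assumes "is_2local_inner_derivation k l m n \<Delta>" "x \<in> Herm k n" "y \<in> Herm k n"
  shows "trace_form l m n (\<Delta> x) y = - trace_form l m n x (\<Delta> y)"
proof -
  obtain D where "is_inner_derivation k l m n D" "\<Delta> x = D x" "\<Delta> y = D y"
    using assms unfolding is_2local_inner_derivation_def by blast
  then show ?thesis
    using inner_derivation_skew_adjoint assms(2,3) by metis
qed

lemma two_local_inner_derivation_square:
  assumes "is_2local_inner_derivation k l m n \<Delta>" "x \<in> Herm k n"
  shows "\<Delta> (jprod l m n x x) = jprod l m n (\<Delta> x) x + jprod l m n x (\<Delta> x)"
proof -
  obtain D where "is_inner_derivation k l m n D" "\<Delta> x = D x"
      "\<Delta> (jprod l m n x x) = D (jprod l m n x x)"
    using assms Herm_jprod unfolding is_2local_inner_derivation_def by blast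
  then show ?thesis
    using inner_derivation_leibniz assms(2) by metis
qed

context
  fixes l m :: "'a::field" and k n and \<Delta> :: "'a mat \<Rightarrow> 'a mat"
  assumes two: "(2::'a) \<noteq> 0" and l: "l \<noteq> 0" and m: "m \<noteq> 0"
    and maps_Herm: "\<And>x. x \<in> Herm k n \<Longrightarrow> \<Delta> x \<in> Herm k n"
    and skew: "\<And>x y. x \<in> Herm k n \<Longrightarrow> y \<in> Herm k n \<Longrightarrow>
      trace_form l m n (\<Delta> x) y = - trace_form l m n x (\<Delta> y)"
begin

lemma skew_adjoint_additive: "x \<in> Herm k n \<Longrightarrow> y \<in> Herm k n \<Longrightarrow> \<Delta> (x + y) = \<Delta> x + \<Delta> y"
  by (rule Herm_eq_if_trace_form_eq[where k = k and n = n, OF two l m])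
    (simp_all add: maps_Herm Herm_add skew trace_form_add_left trace_form_add_right)

lemma skew_adjoint_homogeneous: "x \<in> Herm k n \<Longrightarrow> \<Delta> (msmul c x) = msmul c (\<Delta> x)"
  by (rule Herm_eq_if_trace_form_eq[where k = k and n = n, OF two l m])
    (simp_all add: maps_Herm Herm_msmul skew trace_form_msmul_left trace_form_commute[of l m n x])

end

lemma leibniz_if_square_leibniz:
  fixes \<Delta> :: "'a::field mat \<Rightarrow> 'a mat"
  assumes two: "(2::'a) \<noteq> 0"
    and additive: "\<And>x y. x \<in> Herm k n \<Longrightarrow> y \<in> Herm k n \<Longrightarrow> \<Delta> (x + y) = \<Delta> x + \<Delta> y"
    and square: "\<And>x. x \<in> Herm k n \<Longrightarrow>
      \<Delta> (jprod l m n x x) = jprod l m n (\<Delta> x) x + jprod l m n x (\<Delta> x)"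
    and x: "x \<in> Herm k n" and y: "y \<in> Herm k n"
  shows "\<Delta> (jprod l m n x y) = jprod l m n (\<Delta> x) y + jprod l m n x (\<Delta> y)"
proof (rule mat_double_cancel[OF two])
  let ?J = "jprod l m n"
  have "?J (x + y) (x + y) = ?J x x + (?J x y + ?J x y) + ?J y y"
    by (simp add: jprod_add_left jprod_add_right jprod_commute[of l m n y x] add_ac)
  then have "\<Delta> (?J (x + y) (x + y)) = \<Delta> (?J x x) + (\<Delta> (?J x y) + \<Delta> (?J x y)) + \<Delta> (?J y y)"
    using x y by (simp add: additive Herm_add Herm_jprod)
  moreover have "\<Delta> (?J (x + y) (x + y)) = ?J (\<Delta> x + \<Delta> y) (x + y) + ?J (x + y) (\<Delta> x + \<Delta> y)"
    using square[OF Herm_add[OF x y]] additive[OF x y] by simp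
  ultimately show "\<Delta> (?J x y) + \<Delta> (?J x y) = (?J (\<Delta> x) y + ?J x (\<Delta> y)) + (?J (\<Delta> x) y + ?J x (\<Delta> y))"
    using square[OF x] square[OF y]
    by (simp add: jprod_add_left jprod_add_right jprod_commute[of l m n y "\<Delta> x"]
        jprod_commute[of l m n "\<Delta> y" x] algebra_simps)
qed

theorem theorem3p4:
  fixes l m :: "'a::field" and k :: alg_kind and n :: nat
    and \<Delta> :: "'a mat \<Rightarrow> 'a mat"
  assumes "(2::'a) \<noteq> 0"
    and "n \<ge> 3"
    and "l \<noteq> 0" and "m \<noteq> 0"
    and "division_alg k l m"
    and "is_2local_inner_derivation k l m n \<Delta>"
  shows "is_derivation k l m n \<Delta>"
proof -
  have maps_Herm: "\<And>x. x \<in> Herm k n \<Longrightarrow> \<Delta> x \<in> Herm k n"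
    using assms(6) unfolding is_2local_inner_derivation_def by blast
  note skew = two_local_inner_derivation_skew_adjoint[OF assms(6)]
  note additive = skew_adjoint_additive[OF assms(1,3,4) maps_Herm skew]
  note homogeneous = skew_adjoint_homogeneous[OF assms(1,3,4) maps_Herm skew]
  note leibniz = leibniz_if_square_leibniz[OF assms(1) additive
      two_local_inner_derivation_square[OF assms(6)]]
  show ?thesis
    unfolding is_derivation_def madd_eq_plus
    using maps_Herm additive homogeneous leibniz by blast
qed

end
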